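(* Let $K(z,u)=(u-1)^2(1-zu^2)-zu^3$ and, for real $x\in(0,1/12)$, let $u_1(x)\in(1,2)$ and $u_2(x)\in(0,1)$ be the unique real roots of $u\mapsto K(x,u)$ in these intervals. Fix $\theta\in(0,2\pi)$ and let $D(\theta)=\{z\in\mathbb C:|z|<4\}\setminus\big(\{re^{\mathrm i\theta}:r\ge0\}\cup[1/12,+\infty)\big)$. Then $u_1$ and $u_2$ have analytic continuations on $D(\theta)$. Moreover, $u_2$ is analytic at $z=1/12$ with $u_2(1/12)=(-3+\sqrt{21})/2$, while for $z$ approaching $1/12$ in $D(\theta)$, \[ u_1(z)=2-\sqrt{12/7}\cdot\sqrt{1-12z}+O(1-12z). \]
   Context: $\sqrt{\cdot}$ denotes the principal branch of the square root. *)

theory Defs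
  imports "HOL-Complex_Analysis.Complex_Analysis" "HOL-Library.Landau_Symbols"
begin

definition K :: "complex \<Rightarrow> complex \<Rightarrow> complex" where
  "K z u = (u - 1)^2 * (1 - z * u^2) - z * u^3"

definition u1 :: "real \<Rightarrow> real" where
  "u1 x = (THE u. 1 < u \<and> u < 2 \<and> K (complex_of_real x) (complex_of_real u) = 0)"

definition u2 :: "real \<Rightarrow> real" where
  "u2 x = (THE u. 0 < u \<and> u < 1 \<and> K (complex_of_real x) (complex_of_real u) = 0)"

definition Dom :: "real \<Rightarrow> complex set" where
  "Dom \<theta> = ball 0 4 - ({z. \<exists>r::real. r \<ge> 0 \<and> z = complex_of_real r * cis \<theta>}
                          \<union> {z. \<exists>r::real. r \<ge> 1/12 \<and> z = complex_of_real r})"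

end

theory Submission
  imports Defs
begin

text \<open>
  Substituting \<open>u = 2 / (1 + w)\<close> turns \<open>K z u\<close> into
  \<open>((w\<^sup>2 - 1 - 2z)\<^sup>2 - 4(z\<^sup>2 + 4z)) / (1 + w)^4\<close>, so the roots of \<open>K z\<close> are the
  \<open>2 / (1 + w)\<close> with \<open>w\<^sup>2 = 1 + 2z \<plusminus> 2\<rho>\<close> and \<open>\<rho>\<^sup>2 = z\<^sup>2 + 4z\<close>; on \<open>(0, 1/12)\<close> the root
  in \<open>(1, 2)\<close> takes the minus sign and the root in \<open>(0, 1)\<close> the plus sign.
  With \<open>\<rho> = \<surd>z \<surd>(z + 4)\<close>, where \<open>\<surd>z\<close> is cut along the ray of angle \<open>\<theta>\<close>, the radicands
  \<open>1 + 2z + 2\<rho>\<close> and \<open>1 - 12z\<close> avoid \<open>(-\<infinity>, 0]\<close> on \<open>D(\<theta>)\<close>, which gives the continuations.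
  Near \<open>1/12\<close> this \<open>\<rho>\<close> is the principal root of \<open>z\<^sup>2 + 4z\<close>, analytic with value \<open>7/12\<close>,
  so \<open>B = \<surd>(1 + 2z + 2\<rho>)\<close> is analytic with \<open>B(1/12) = \<surd>(7/3)\<close>; this gives \<open>u\<^sub>2(1/12)\<close>, and
  \<open>u\<^sub>1 = 2B / (B + \<surd>(1 - 12z)) = 2 - 2\<surd>(1 - 12z)/B + O(1 - 12z)\<close> gives the expansion of \<open>u\<^sub>1\<close>.
\<close>

lemma K_two_div_one_plus:
  fixes z w :: complex
  assumes "w \<noteq> -1"
  shows "K z (2 / (1 + w)) = ((w\<^sup>2 - 1 - 2 * z)\<^sup>2 - 4 * (z\<^sup>2 + 4 * z)) / (1 + w) ^ 4"
proof -
  define u where "u = 2 / (1 + w)"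
  have "1 + w \<noteq> 0"
    using assms by (metis add_eq_0_iff)
  then have u: "u * (1 + w) = 2" and u1: "(u - 1) * (1 + w) = 1 - w"
    by (simp_all add: u_def field_simps)
  have "K z u * (1 + w) ^ 4
      = ((u - 1) * (1 + w))\<^sup>2 * ((1 + w)\<^sup>2 - z * (u * (1 + w))\<^sup>2) - z * (u * (1 + w)) ^ 3 * (1 + w)"
    unfolding K_def by algebra
  also have "\<dots> = (w\<^sup>2 - 1 - 2 * z)\<^sup>2 - 4 * (z\<^sup>2 + 4 * z)"
    unfolding u u1 by algebra
  finally show ?thesis
    unfolding u_def[symmetric] using \<open>1 + w \<noteq> 0\<close> by (simp add: eq_divide_eq)
qed

lemma disc_branches_mult:
  fixes z \<rho> :: "'a :: comm_ring_1"
  assumes "\<rho>\<^sup>2 = z\<^sup>2 + 4 * z"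
  shows "(1 + 2 * z - 2 * \<rho>) * (1 + 2 * z + 2 * \<rho>) = 1 - 12 * z"
proof -
  have "(1 + 2 * z - 2 * \<rho>) * (1 + 2 * z + 2 * \<rho>) = (1 + 2 * z)\<^sup>2 - 4 * \<rho>\<^sup>2"
    by (simp add: algebra_simps power2_eq_square)
  also have "\<dots> = 1 - 12 * z"
    unfolding assms by (simp add: algebra_simps power2_eq_square)
  finally show ?thesis .
qed

lemma K_two_div_one_plus_eq_0_iff:
  fixes z w \<rho> :: complex
  assumes "w \<noteq> -1" and "\<rho>\<^sup>2 = z\<^sup>2 + 4 * z"
  shows "K z (2 / (1 + w)) = 0 \<longleftrightarrow> w\<^sup>2 = 1 + 2 * z - 2 * \<rho> \<or> w\<^sup>2 = 1 + 2 * z + 2 * \<rho>"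
proof -
  have "(w\<^sup>2 - 1 - 2 * z)\<^sup>2 - 4 * (z\<^sup>2 + 4 * z)
      = (w\<^sup>2 - (1 + 2 * z - 2 * \<rho>)) * (w\<^sup>2 - (1 + 2 * z + 2 * \<rho>))"
    unfolding assms(2)[symmetric] by algebra
  moreover have "1 + w \<noteq> 0"
    using assms(1) by (metis add_eq_0_iff)
  ultimately show ?thesis
    unfolding K_two_div_one_plus[OF assms(1)] by simp
qed

lemma disc_branches_real_bounds:
  fixes x :: real
  assumes "0 < x" and "x < 1/12"
  defines "q \<equiv> sqrt (x\<^sup>2 + 4 * x)"
  shows "0 < 1 + 2 * x - 2 * q" and "1 + 2 * x - 2 * q < 1" and "1 < 1 + 2 * x + 2 * q"
proof -
  have q2: "q\<^sup>2 = x\<^sup>2 + 4 * x" and "0 \<le> q"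
    using assms(1) by (simp_all add: q_def)
  have "x\<^sup>2 < q\<^sup>2"
    using assms(1) q2 by simp
  then have "x < q"
    using \<open>0 \<le> q\<close> by (rule power2_less_imp_less)
  have "0 < (1 + 2 * x - 2 * q) * (1 + 2 * x + 2 * q)"
    unfolding disc_branches_mult[OF q2] using assms(2) by simp
  then have "0 < 1 + 2 * x - 2 * q"
    using \<open>0 \<le> q\<close> assms(1) by (simp add: zero_less_mult_iff)
  with \<open>x < q\<close> show "0 < 1 + 2 * x - 2 * q" "1 + 2 * x - 2 * q < 1" "1 < 1 + 2 * x + 2 * q"
    using assms(1) by linarith+
qed

lemma K_of_real_eq_0_iff:
  fixes x u :: real
  assumes "0 < x" and "0 < u"
  shows "K (of_real x) (of_real u) = 0 \<longleftrightarrow>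
    (2 / u - 1)\<^sup>2 = 1 + 2 * x - 2 * sqrt (x\<^sup>2 + 4 * x) \<or>
    (2 / u - 1)\<^sup>2 = 1 + 2 * x + 2 * sqrt (x\<^sup>2 + 4 * x)"
proof -
  define w where "w = 2 / u - 1"
  define q where "q = sqrt (x\<^sup>2 + 4 * x)"
  have w: "of_real w \<noteq> (-1 :: complex)" and u: "of_real u = 2 / (1 + complex_of_real w)"
    using assms(2) by (simp_all add: w_def field_simps)
  have "(complex_of_real q)\<^sup>2 = (of_real x)\<^sup>2 + 4 * of_real x"
    using assms(1) by (simp add: q_def flip: of_real_power)
  moreover have "(complex_of_real w)\<^sup>2 = of_real (w\<^sup>2)"
    and "1 + 2 * complex_of_real x - 2 * of_real q = of_real (1 + 2 * x - 2 * q)"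
    and "1 + 2 * complex_of_real x + 2 * of_real q = of_real (1 + 2 * x + 2 * q)"
    by simp_all
  ultimately show ?thesis
    using K_two_div_one_plus_eq_0_iff[OF w] unfolding u w_def[symmetric] q_def[symmetric]
    by (simp only: of_real_eq_iff)
qed

lemma u1_closed_form:
  fixes x :: real
  assumes "0 < x" and "x < 1/12"
  shows "u1 x = 2 / (1 + sqrt (1 + 2 * x - 2 * sqrt (x\<^sup>2 + 4 * x)))"
proof -
  define q where "q = sqrt (x\<^sup>2 + 4 * x)"
  define w where "w = sqrt (1 + 2 * x - 2 * q)"
  have bounds: "0 < 1 + 2 * x - 2 * q" "1 + 2 * x - 2 * q < 1" "1 < 1 + 2 * x + 2 * q"
    using disc_branches_real_bounds[OF assms] by (simp_all add: q_def)
  then have "0 < w" "w < 1" and w2: "w\<^sup>2 = 1 + 2 * x - 2 * q"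
    by (simp_all add: w_def)
  have "1 < u \<and> u < 2 \<and> K (of_real x) (of_real u) = 0 \<longleftrightarrow> u = 2 / (1 + w)" for u
  proof
    assume u: "1 < u \<and> u < 2 \<and> K (of_real x) (of_real u) = 0"
    then have "0 < 2 / u - 1" "2 / u - 1 < 1"
      by (auto simp: field_simps)
    then have "(2 / u - 1)\<^sup>2 < 1"
      by (simp add: abs_square_less_1)
    then have "(2 / u - 1)\<^sup>2 = w\<^sup>2"
      using u K_of_real_eq_0_iff[OF assms(1), of u] bounds w2 by (auto simp: q_def)
    then have "2 / u - 1 = w"
      using \<open>0 < 2 / u - 1\<close> \<open>0 < w\<close> by simp
    then show "u = 2 / (1 + w)"
      using u \<open>0 < w\<close> by (auto simp: field_simps)
  next
    assume u: "u = 2 / (1 + w)"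
    have "1 < u" "u < 2" "2 / u - 1 = w"
      unfolding u using \<open>0 < w\<close> \<open>w < 1\<close> by (simp_all add: field_simps)
    then show "1 < u \<and> u < 2 \<and> K (of_real x) (of_real u) = 0"
      using K_of_real_eq_0_iff[OF assms(1), of u] w2 by (simp add: q_def)
  qed
  then show ?thesis
    by (simp add: u1_def w_def q_def)
qed

lemma u2_closed_form:
  fixes x :: real
  assumes "0 < x" and "x < 1/12"
  shows "u2 x = 2 / (1 + sqrt (1 + 2 * x + 2 * sqrt (x\<^sup>2 + 4 * x)))"
proof -
  define q where "q = sqrt (x\<^sup>2 + 4 * x)"
  define w where "w = sqrt (1 + 2 * x + 2 * q)"
  have bounds: "0 < 1 + 2 * x - 2 * q" "1 + 2 * x - 2 * q < 1" "1 < 1 + 2 * x + 2 * q"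
    using disc_branches_real_bounds[OF assms] by (simp_all add: q_def)
  then have "1 < w" and w2: "w\<^sup>2 = 1 + 2 * x + 2 * q"
    by (simp_all add: w_def)
  have "0 < u \<and> u < 1 \<and> K (of_real x) (of_real u) = 0 \<longleftrightarrow> u = 2 / (1 + w)" for u
  proof
    assume u: "0 < u \<and> u < 1 \<and> K (of_real x) (of_real u) = 0"
    then have "1 < 2 / u - 1"
      by (auto simp: field_simps)
    then have "1 < (2 / u - 1)\<^sup>2"
      by simp
    then have "(2 / u - 1)\<^sup>2 = w\<^sup>2"
      using u K_of_real_eq_0_iff[OF assms(1), of u] bounds w2 by (auto simp: q_def)
    then have "2 / u - 1 = w"
      using \<open>1 < 2 / u - 1\<close> \<open>1 < w\<close> by simp
    then show "u = 2 / (1 + w)"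
      using u \<open>1 < w\<close> by (auto simp: field_simps)
  next
    assume u: "u = 2 / (1 + w)"
    have "0 < u" "u < 1" "2 / u - 1 = w"
      unfolding u using \<open>1 < w\<close> by (simp_all add: field_simps)
    then show "0 < u \<and> u < 1 \<and> K (of_real x) (of_real u) = 0"
      using K_of_real_eq_0_iff[OF assms(1), of u] w2 by (simp add: q_def)
  qed
  then show ?thesis
    by (simp add: u2_def w_def q_def)
qed

text \<open>Since \<open>(1 + 2z - 2\<rho>)(1 + 2z + 2\<rho>) = 1 - 12z\<close>, \<open>u1_branch z \<rho>\<close> is \<open>2 / (1 + w)\<close> with
  \<open>w\<^sup>2 = 1 + 2z - 2\<rho>\<close>; this form makes the singularity \<open>\<surd>(1 - 12z)\<close> at \<open>1/12\<close> explicit.\<close>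

definition u1_branch :: "complex \<Rightarrow> complex \<Rightarrow> complex" where
  "u1_branch z \<rho> = 2 * csqrt (1 + 2 * z + 2 * \<rho>) / (csqrt (1 + 2 * z + 2 * \<rho>) + csqrt (1 - 12 * z))"

definition u2_branch :: "complex \<Rightarrow> complex \<Rightarrow> complex" where
  "u2_branch z \<rho> = 2 / (1 + csqrt (1 + 2 * z + 2 * \<rho>))"

lemma u1_branch_of_real:
  fixes x :: real
  assumes "0 < x" and "x < 1/12"
  shows "u1_branch (of_real x) (of_real (sqrt (x\<^sup>2 + 4 * x))) = of_real (u1 x)"
proof -
  define q where "q = sqrt (x\<^sup>2 + 4 * x)"
  define a where "a = sqrt (1 + 2 * x - 2 * q)"
  define b where "b = sqrt (1 + 2 * x + 2 * q)"
  have bounds: "0 \<le> 1 + 2 * x - 2 * q" "0 < 1 + 2 * x + 2 * q" "0 \<le> 1 - 12 * x"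
    using disc_branches_real_bounds[OF assms] assms by (simp_all add: q_def)
  have "q\<^sup>2 = x\<^sup>2 + 4 * x"
    using assms(1) by (simp add: q_def)
  then have ab: "sqrt (1 - 12 * x) = a * b"
    by (simp add: a_def b_def flip: real_sqrt_mult disc_branches_mult)
  have "1 + 2 * complex_of_real x + 2 * of_real q = of_real (1 + 2 * x + 2 * q)"
    and "1 - 12 * complex_of_real x = of_real (1 - 12 * x)"
    by simp_all
  then have "u1_branch (of_real x) (of_real q) = of_real (2 * b / (b + a * b))"
    using bounds by (simp add: u1_branch_def csqrt_of_real ab flip: b_def)
  also have "\<dots> = of_real (2 / (1 + a))"
  proof -
    have "b \<noteq> 0"
      using bounds by (simp add: b_def)
    then have "2 * b / ((1 + a) * b) = 2 / (1 + a)"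
      by simp
    then show ?thesis
      by (simp add: algebra_simps)
  qed
  finally show ?thesis
    by (simp add: u1_closed_form[OF assms] a_def q_def)
qed

lemma u2_branch_of_real:
  fixes x :: real
  assumes "0 < x" and "x < 1/12"
  shows "u2_branch (of_real x) (of_real (sqrt (x\<^sup>2 + 4 * x))) = of_real (u2 x)"
proof -
  define q where "q = sqrt (x\<^sup>2 + 4 * x)"
  have "0 \<le> 1 + 2 * x + 2 * q"
    using disc_branches_real_bounds[OF assms] by (simp add: q_def)
  moreover have "1 + 2 * complex_of_real x + 2 * of_real q = of_real (1 + 2 * x + 2 * q)"
    by simp
  ultimately show ?thesis
    by (simp add: u2_branch_def u2_closed_form[OF assms] csqrt_of_real flip: q_def)
qed

lemma Re_csqrt_eq_0_iff: "Re (csqrt z) = 0 \<longleftrightarrow> z \<in> \<real>\<^sub>\<le>\<^sub>0"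
proof
  assume "Re (csqrt z) = 0"
  then have "Re (csqrt z * csqrt z) \<le> 0" and "Im (csqrt z * csqrt z) = 0"
    by simp_all
  then show "z \<in> \<real>\<^sub>\<le>\<^sub>0"
    by (simp add: complex_nonpos_Reals_iff flip: power2_eq_square)
next
  assume "z \<in> \<real>\<^sub>\<le>\<^sub>0"
  then show "Re (csqrt z) = 0"
    by (simp add: complex_nonpos_Reals_iff)
qed

lemma csqrt_add_csqrt_neq_0:
  assumes "z \<notin> \<real>\<^sub>\<le>\<^sub>0"
  shows "csqrt z + csqrt w \<noteq> 0"
proof
  assume "csqrt z + csqrt w = 0"
  then have "Re (csqrt z) + Re (csqrt w) = 0"
    by (metis plus_complex.sel(1) zero_complex.sel(1))
  then have "Re (csqrt z) = 0"
    using Re_csqrt[of z] Re_csqrt[of w] by linarith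
  with assms show False
    using Re_csqrt_eq_0_iff by blast
qed

lemma one_plus_csqrt_neq_0: "1 + csqrt z \<noteq> 0"
  using csqrt_add_csqrt_neq_0[of 1 z] by simp

lemma Re_mult_norm_diff_le_norm_square_diff:
  fixes a b :: complex
  assumes "0 \<le> Re a" and "0 \<le> Re b"
  shows "Re b * norm (a - b) \<le> norm (a\<^sup>2 - b\<^sup>2)"
proof -
  have "a\<^sup>2 - b\<^sup>2 = (a - b) * (a + b)"
    by (simp add: power2_eq_square algebra_simps)
  then have "norm (a\<^sup>2 - b\<^sup>2) = norm (a - b) * norm (a + b)"
    by (simp add: norm_mult)
  moreover have "Re b \<le> norm (a + b)"
    using assms(1) complex_Re_le_cmod[of "a + b"] by simp
  then have "Re b * norm (a - b) \<le> norm (a + b) * norm (a - b)"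
    by (rule mult_right_mono) simp
  ultimately show ?thesis
    by (simp add: mult.commute)
qed

lemma eq_on_connected_if_squares_eq:
  fixes f g :: "'a::topological_space \<Rightarrow> 'b::real_normed_field"
  assumes "connected S" and "continuous_on S f" and "continuous_on S g"
    and "\<And>z. z \<in> S \<Longrightarrow> (f z)\<^sup>2 = (g z)\<^sup>2" and "\<And>z. z \<in> S \<Longrightarrow> g z \<noteq> 0"
    and "a \<in> S" and "f a = g a" and "z \<in> S"
  shows "f z = g z"
proof -
  have "f w / g w \<in> {1, -1}" if "w \<in> S" for w
  proof -
    have "(f w / g w)\<^sup>2 = 1"
      using assms(4,5)[OF that] by (simp add: power_divide)
    then show ?thesis
      by (simp add: power2_eq_1_iff)
  qed
  then have "(\<lambda>z. f z / g z) ` S \<subseteq> {1, -1}"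
    by blast
  then have "(\<lambda>z. f z / g z) constant_on S"
    using assms(1-3,5) by (intro continuous_finite_range_constant continuous_intros)
      (auto intro: finite_subset)
  then have "f z / g z = f a / g a"
    using assms(6,8) by (auto simp: constant_on_def)
  with assms(5-8) show ?thesis
    by simp
qed

text \<open>A branch of \<open>\<surd>z\<close> whose cut is the ray \<open>{r cis \<theta> | r \<ge> 0}\<close>.\<close>
definition sqrt_cut :: "real \<Rightarrow> complex \<Rightarrow> complex" where
  "sqrt_cut \<theta> z = cis ((\<theta> - pi) / 2) * csqrt (- z * cis (- \<theta>))"

lemma sqrt_cut_squared: "(sqrt_cut \<theta> z)\<^sup>2 = z"
proof -
  have "cis ((\<theta> - pi) / 2) ^ 2 = cis (\<theta> - pi)"
    by (simp add: power2_eq_square cis_mult)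
  also have "\<dots> = - cis \<theta>"
    by (simp add: complex_eq_iff)
  finally have "cis ((\<theta> - pi) / 2) ^ 2 = - cis \<theta>" .
  then show ?thesis
    by (simp add: sqrt_cut_def power_mult_distrib cis_mult)
qed

lemma csqrt_neg_of_real_cis:
  assumes "0 < \<theta>" and "\<theta> < 2 * pi" and "0 < x"
  shows "csqrt (- of_real x * cis (- \<theta>)) = of_real (sqrt x) * cis ((pi - \<theta>) / 2)"
proof (rule csqrt_unique)
  have "cis ((pi - \<theta>) / 2) ^ 2 = cis (pi - \<theta>)"
    by (simp add: power2_eq_square cis_mult)
  also have "\<dots> = - cis (- \<theta>)"
    by (simp add: complex_eq_iff)
  finally have "cis ((pi - \<theta>) / 2) ^ 2 = - cis (- \<theta>)" .
  then show "(of_real (sqrt x) * cis ((pi - \<theta>) / 2))\<^sup>2 = - of_real x * cis (- \<theta>)"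
    using assms(3) by (simp add: power_mult_distrib flip: of_real_power)
  have "0 < cos ((pi - \<theta>) / 2)"
    using assms(1,2) by (intro cos_gt_zero_pi) auto
  then show "0 < Re (of_real (sqrt x) * cis ((pi - \<theta>) / 2)) \<or>
      Re (of_real (sqrt x) * cis ((pi - \<theta>) / 2)) = 0 \<and> 0 \<le> Im (of_real (sqrt x) * cis ((pi - \<theta>) / 2))"
    using assms(3) by simp
qed

lemma sqrt_cut_of_real:
  assumes "0 < \<theta>" and "\<theta> < 2 * pi" and "0 < x"
  shows "sqrt_cut \<theta> (of_real x) = of_real (sqrt x)"
proof -
  have "(\<theta> - pi) / 2 + (pi - \<theta>) / 2 = 0"
    by (simp add: field_simps)
  then have "cis ((\<theta> - pi) / 2) * cis ((pi - \<theta>) / 2) = 1"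
    by (simp add: cis_mult)
  then show ?thesis
    unfolding sqrt_cut_def csqrt_neg_of_real_cis[OF assms] by (simp add: mult.left_commute)
qed

lemma neg_of_real_cis_notin_nonpos_Reals:
  assumes "0 < \<theta>" and "\<theta> < 2 * pi" and "0 < x"
  shows "- of_real x * cis (- \<theta>) \<notin> \<real>\<^sub>\<le>\<^sub>0"
proof -
  have "0 < cos ((pi - \<theta>) / 2)"
    using assms(1,2) by (intro cos_gt_zero_pi) auto
  then have "Re (csqrt (- of_real x * cis (- \<theta>))) \<noteq> 0"
    unfolding csqrt_neg_of_real_cis[OF assms] using assms(3) by simp
  then show ?thesis
    using Re_csqrt_eq_0_iff by blast
qed

lemma ray_iff_nonpos_Reals:
  "(\<exists>r::real. r \<ge> 0 \<and> z = of_real r * cis \<theta>) \<longleftrightarrow> - z * cis (- \<theta>) \<in> \<real>\<^sub>\<le>\<^sub>0"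
proof
  assume "\<exists>r::real. r \<ge> 0 \<and> z = of_real r * cis \<theta>"
  then obtain r where "r \<ge> 0" "z = of_real r * cis \<theta>"
    by blast
  then show "- z * cis (- \<theta>) \<in> \<real>\<^sub>\<le>\<^sub>0"
    by (simp add: cis_mult mult.assoc complex_nonpos_Reals_iff)
next
  assume "- z * cis (- \<theta>) \<in> \<real>\<^sub>\<le>\<^sub>0"
  then obtain t where t: "- z * cis (- \<theta>) = of_real t" "t \<le> 0"
    by (rule nonpos_Reals_cases)
  have "z = - (- z * cis (- \<theta>)) * cis \<theta>"
    by (simp add: cis_mult mult.assoc)
  also have "\<dots> = of_real (- t) * cis \<theta>"
    unfolding t(1) by simp
  finally have "z = of_real (- t) * cis \<theta>" .
  with t(2) show "\<exists>r::real. r \<ge> 0 \<and> z = of_real r * cis \<theta>"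
    by (intro exI[of _ "- t"]) simp
qed

lemma slit_iff_nonpos_Reals:
  fixes z :: complex
  shows "(\<exists>r::real. r \<ge> 1/12 \<and> z = of_real r) \<longleftrightarrow> 1 - 12 * z \<in> \<real>\<^sub>\<le>\<^sub>0"
proof
  assume "\<exists>r::real. r \<ge> 1/12 \<and> z = of_real r"
  then show "1 - 12 * z \<in> \<real>\<^sub>\<le>\<^sub>0"
    by (auto simp: complex_nonpos_Reals_iff)
next
  assume "1 - 12 * z \<in> \<real>\<^sub>\<le>\<^sub>0"
  then obtain t where t: "1 - 12 * z = of_real t" "t \<le> 0"
    by (rule nonpos_Reals_cases)
  then have "z = of_real ((1 - t) / 12)"
    by (simp add: field_simps)
  with t(2) show "\<exists>r::real. r \<ge> 1/12 \<and> z = of_real r"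
    by (intro exI[of _ "(1 - t) / 12"]) simp
qed

lemma mem_Dom_iff:
  "z \<in> Dom \<theta> \<longleftrightarrow> norm z < 4 \<and> - z * cis (- \<theta>) \<notin> \<real>\<^sub>\<le>\<^sub>0 \<and> 1 - 12 * z \<notin> \<real>\<^sub>\<le>\<^sub>0"
  unfolding Dom_def using ray_iff_nonpos_Reals[of z \<theta>] slit_iff_nonpos_Reals[of z] by auto

lemma disc_branch_nonpos_Reals_imp_real:
  fixes z \<rho> :: complex
  assumes "\<rho>\<^sup>2 = z\<^sup>2 + 4 * z" and "1 + 2 * z + 2 * \<rho> \<in> \<real>\<^sub>\<le>\<^sub>0"
  shows "\<exists>r. z = of_real r \<and> (1/12 \<le> r \<or> r \<le> -4)"
proof -
  obtain t where t: "1 + 2 * z + 2 * \<rho> = of_real t" "t \<le> 0"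
    using assms(2) by (rule nonpos_Reals_cases)
  define \<sigma> where "\<sigma> = (1 - t) / 4"
  have "\<sigma> \<ge> 1/4"
    using t(2) by (simp add: \<sigma>_def)
  have "\<rho> = ((1 + 2 * z + 2 * \<rho>) - 1 - 2 * z) / 2"
    by simp
  also have "\<dots> = - z - 2 * of_real \<sigma>"
    unfolding t(1) \<sigma>_def by (simp add: field_simps)
  finally have "(- z - 2 * of_real \<sigma>)\<^sup>2 = z\<^sup>2 + 4 * z"
    using assms(1) by simp
  moreover have "4 * (z * (1 - of_real \<sigma>) - of_real (\<sigma>\<^sup>2)) = z\<^sup>2 + 4 * z - (- z - 2 * of_real \<sigma>)\<^sup>2"
    by (simp add: power2_eq_square algebra_simps)
  ultimately have z\<sigma>: "z * (1 - of_real \<sigma>) = of_real (\<sigma>\<^sup>2)"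
    by simp
  then have "\<sigma> \<noteq> 1"
    using \<open>\<sigma> \<ge> 1/4\<close> by auto
  then have z: "z = of_real (\<sigma>\<^sup>2 / (1 - \<sigma>))"
    using z\<sigma> by (simp add: field_simps)
  show ?thesis
  proof (cases "\<sigma> < 1")
    case True
    have "0 \<le> (4 * \<sigma> - 1) * (3 * \<sigma> + 1)"
      using \<open>\<sigma> \<ge> 1/4\<close> by simp
    also have "\<dots> = 12 * \<sigma>\<^sup>2 + \<sigma> - 1"
      by (simp add: power2_eq_square algebra_simps)
    finally have "1/12 \<le> \<sigma>\<^sup>2 / (1 - \<sigma>)"
      using True by (simp add: le_divide_eq)
    with z show ?thesis
      by blast
  next
    case False
    have "0 \<le> (\<sigma> - 2)\<^sup>2"
      by simp
    also have "\<dots> = \<sigma>\<^sup>2 - 4 * \<sigma> + 4"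
      by (simp add: power2_eq_square algebra_simps)
    finally have "\<sigma>\<^sup>2 / (1 - \<sigma>) \<le> -4"
      using False \<open>\<sigma> \<noteq> 1\<close> by (simp add: divide_le_eq)
    with z show ?thesis
      by blast
  qed
qed

lemma disc_branch_notin_nonpos_Reals:
  assumes "z \<in> Dom \<theta>" and "\<rho>\<^sup>2 = z\<^sup>2 + 4 * z"
  shows "1 + 2 * z + 2 * \<rho> \<notin> \<real>\<^sub>\<le>\<^sub>0"
proof
  assume "1 + 2 * z + 2 * \<rho> \<in> \<real>\<^sub>\<le>\<^sub>0"
  then obtain r where "z = of_real r" "1/12 \<le> r \<or> r \<le> -4"
    using disc_branch_nonpos_Reals_imp_real[OF assms(2)] by blast
  with assms(1) show False
    by (auto simp: mem_Dom_iff complex_nonpos_Reals_iff)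
qed

definition sqrt_disc :: "real \<Rightarrow> complex \<Rightarrow> complex" where
  "sqrt_disc \<theta> z = sqrt_cut \<theta> z * csqrt (z + 4)"

lemma sqrt_disc_squared: "(sqrt_disc \<theta> z)\<^sup>2 = z\<^sup>2 + 4 * z"
  unfolding sqrt_disc_def power_mult_distrib sqrt_cut_squared power2_csqrt
  by (simp add: power2_eq_square algebra_simps)

lemma sqrt_disc_of_real:
  assumes "0 < \<theta>" and "\<theta> < 2 * pi" and "0 < x"
  shows "sqrt_disc \<theta> (of_real x) = of_real (sqrt (x\<^sup>2 + 4 * x))"
proof -
  have "of_real x + 4 = complex_of_real (x + 4)"
    by simp
  then have "csqrt (of_real x + 4) = of_real (sqrt (x + 4))"
    using assms(3) by (simp add: csqrt_of_real)
  moreover have "sqrt x * sqrt (x + 4) = sqrt (x\<^sup>2 + 4 * x)"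
    by (simp add: power2_eq_square algebra_simps flip: real_sqrt_mult)
  ultimately show ?thesis
    by (simp add: sqrt_disc_def sqrt_cut_of_real[OF assms] flip: of_real_mult)
qed

lemma holomorphic_on_sqrt_disc:
  assumes "\<And>z. z \<in> S \<Longrightarrow> - z * cis (- \<theta>) \<notin> \<real>\<^sub>\<le>\<^sub>0" and "\<And>z. z \<in> S \<Longrightarrow> z + 4 \<notin> \<real>\<^sub>\<le>\<^sub>0"
  shows "sqrt_disc \<theta> holomorphic_on S"
  unfolding sqrt_disc_def[abs_def] sqrt_cut_def using assms by (intro holomorphic_intros) auto

lemma holomorphic_on_Dom_sqrt_disc: "sqrt_disc \<theta> holomorphic_on Dom \<theta>"
proof (rule holomorphic_on_sqrt_disc)
  fix z assume "z \<in> Dom \<theta>"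
  then show "- z * cis (- \<theta>) \<notin> \<real>\<^sub>\<le>\<^sub>0" and "z + 4 \<notin> \<real>\<^sub>\<le>\<^sub>0"
    using abs_Re_le_cmod[of z] by (auto simp: mem_Dom_iff complex_nonpos_Reals_iff)
qed

lemma holomorphic_on_u1_branch:
  assumes "\<rho> holomorphic_on S"
    and "\<And>z. z \<in> S \<Longrightarrow> 1 + 2 * z + 2 * \<rho> z \<notin> \<real>\<^sub>\<le>\<^sub>0" and "\<And>z. z \<in> S \<Longrightarrow> 1 - 12 * z \<notin> \<real>\<^sub>\<le>\<^sub>0"
  shows "(\<lambda>z. u1_branch z (\<rho> z)) holomorphic_on S"
  unfolding u1_branch_def using assms by (intro holomorphic_intros csqrt_add_csqrt_neq_0) auto

lemma holomorphic_on_u2_branch: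
  assumes "\<rho> holomorphic_on S" and "\<And>z. z \<in> S \<Longrightarrow> 1 + 2 * z + 2 * \<rho> z \<notin> \<real>\<^sub>\<le>\<^sub>0"
  shows "(\<lambda>z. u2_branch z (\<rho> z)) holomorphic_on S"
  unfolding u2_branch_def using assms by (intro holomorphic_intros one_plus_csqrt_neq_0) auto

lemma disc_notin_nonpos_Reals_if_Re_pos:
  fixes z :: complex
  assumes "0 < Re z"
  shows "z\<^sup>2 + 4 * z \<notin> \<real>\<^sub>\<le>\<^sub>0"
proof
  assume "z\<^sup>2 + 4 * z \<in> \<real>\<^sub>\<le>\<^sub>0"
  then have "2 * Im z * (Re z + 2) = 0" and re: "(Re z)\<^sup>2 - (Im z)\<^sup>2 + 4 * Re z \<le> 0"
    by (auto simp: complex_nonpos_Reals_iff power2_eq_square algebra_simps)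
  then have "Im z = 0"
    using assms by simp
  with re assms show False
    by (simp add: power2_eq_square) (smt (verit) mult_pos_pos)
qed

lemma norm_one_minus_twelve_mult:
  fixes z :: complex
  shows "norm (1 - 12 * z) = 12 * norm (z - 1/12)"
  using norm_mult[of 12 "z - 1/12"] by (simp add: algebra_simps norm_minus_commute)

lemma Re_pos_of_mem_ball_twelfth:
  fixes z :: complex
  assumes "z \<in> ball (1/12) r" and "r \<le> 1/12"
  shows "0 < Re z"
proof -
  have "Re (1/12 - z) \<le> norm (1/12 - z)"
    by (rule complex_Re_le_cmod)
  moreover have "norm (1/12 - z) < 1/12"
    using assms by (simp add: dist_norm)
  ultimately show ?thesis
    by simp
qed

lemma ball_twelfth_avoids_ray:
  assumes "0 < \<theta>" and "\<theta> < 2 * pi"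
  obtains r where "0 < r" and "\<And>z. z \<in> ball (1/12) r \<Longrightarrow> - z * cis (- \<theta>) \<notin> \<real>\<^sub>\<le>\<^sub>0"
proof -
  define P where "P = {z. - z * cis (- \<theta>) \<notin> \<real>\<^sub>\<le>\<^sub>0}"
  have "P = - ((\<lambda>z. - z * cis (- \<theta>)) -` \<real>\<^sub>\<le>\<^sub>0)"
    by (auto simp: P_def)
  then have "open P"
    by (auto intro!: open_Compl continuous_closed_vimage continuous_intros)
  moreover have "1/12 \<in> P"
    using neg_of_real_cis_notin_nonpos_Reals[OF assms, of "1/12"] by (simp add: P_def)
  ultimately obtain r where "0 < r" "ball (1/12) r \<subseteq> P"
    using open_contains_ball_eq by blast
  then show thesis
    using that unfolding P_def by blast
qed

lemma csqrt_disc_twelfth: "csqrt ((1/12)\<^sup>2 + 4 * (1/12)) = 7/12"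
  by (rule csqrt_unique) (simp_all add: power2_eq_square)

lemma sqrt_disc_twelfth:
  assumes "0 < \<theta>" and "\<theta> < 2 * pi"
  shows "sqrt_disc \<theta> (1/12) = 7/12"
proof -
  have sqrt_val: "sqrt ((1/12)\<^sup>2 + 4 * (1/12)) = 7/12"
    by (rule real_sqrt_unique) (simp_all add: power2_eq_square)
  show ?thesis
    using sqrt_disc_of_real[OF assms, of "1/12"] unfolding sqrt_val by simp
qed

lemma sqrt_disc_near_twelfth:
  assumes "0 < \<theta>" and "\<theta> < 2 * pi"
  obtains r where "0 < r" and "r \<le> 1/48"
    and "\<And>z. z \<in> ball (1/12) r \<Longrightarrow> 0 < Re z \<and> sqrt_disc \<theta> z = csqrt (z\<^sup>2 + 4 * z)"
proof -
  obtain r0 where "0 < r0" and ray: "\<And>z. z \<in> ball (1/12) r0 \<Longrightarrow> - z * cis (- \<theta>) \<notin> \<real>\<^sub>\<le>\<^sub>0"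
    using ball_twelfth_avoids_ray[OF assms] by blast
  define r where "r = min r0 (1/48)"
  have "0 < r" and "r \<le> 1/48"
    using \<open>0 < r0\<close> by (simp_all add: r_def)
  have Re: "0 < Re z" if "z \<in> ball (1/12) r" for z
    using Re_pos_of_mem_ball_twelfth[OF that] \<open>r \<le> 1/48\<close> by simp
  have cont_disc: "continuous_on (ball (1/12) r) (sqrt_disc \<theta>)"
  proof (rule holomorphic_on_imp_continuous_on, rule holomorphic_on_sqrt_disc)
    fix w :: complex
    assume w: "w \<in> ball (1/12) r"
    then show "- w * cis (- \<theta>) \<notin> \<real>\<^sub>\<le>\<^sub>0"
      by (intro ray) (simp add: r_def)
    show "w + 4 \<notin> \<real>\<^sub>\<le>\<^sub>0"
      using Re[OF w] by (simp add: complex_nonpos_Reals_iff)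
  qed
  have cont_csqrt: "continuous_on (ball (1/12) r) (\<lambda>z. csqrt (z\<^sup>2 + 4 * z))"
    using Re disc_notin_nonpos_Reals_if_Re_pos
    by (intro holomorphic_on_imp_continuous_on holomorphic_intros) auto
  have csqrt_neq_0: "csqrt (w\<^sup>2 + 4 * w) \<noteq> 0" if "w \<in> ball (1/12) r" for w
    using disc_notin_nonpos_Reals_if_Re_pos[OF Re[OF that]] by auto
  have at_twelfth: "sqrt_disc \<theta> (1/12) = csqrt ((1/12)\<^sup>2 + 4 * (1/12))"
    by (simp only: sqrt_disc_twelfth[OF assms] csqrt_disc_twelfth)
  have "sqrt_disc \<theta> z = csqrt (z\<^sup>2 + 4 * z)" if "z \<in> ball (1/12) r" for z
    using eq_on_connected_if_squares_eq[OF connected_ball cont_disc cont_csqrt _ csqrt_neq_0 _ at_twelfth that]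
      \<open>0 < r\<close> by (simp add: sqrt_disc_squared)
  with \<open>0 < r\<close> \<open>r \<le> 1/48\<close> Re show thesis
    using that by blast
qed

lemma u2_branch_twelfth: "u2_branch (1/12) (csqrt ((1/12)\<^sup>2 + 4 * (1/12))) = (-3 + of_real (sqrt 21)) / 2"
proof -
  have "1 + 2 * (1/12) + 2 * (7/12) = complex_of_real (7/3)"
    by simp
  moreover have "csqrt (of_real (7/3)) = of_real (sqrt (7/3))"
    by (rule csqrt_of_real) simp
  ultimately have "u2_branch (1/12) (csqrt ((1/12)\<^sup>2 + 4 * (1/12))) = 2 / (1 + of_real (sqrt (7/3)))"
    unfolding u2_branch_def csqrt_disc_twelfth by simp
  also have "\<dots> = of_real (2 / (1 + sqrt (7/3)))"
    by simp
  also have "2 / (1 + sqrt (7/3)) = (-3 + sqrt 21) / 2"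
  proof -
    define s where "s = sqrt (7/3)"
    have "sqrt 21 = 3 * s"
      unfolding s_def by (rule real_sqrt_unique) (simp_all add: power_mult_distrib)
    have "(-3 + 3 * s) * (1 + s) = 3 * s\<^sup>2 - 3"
      by (simp add: power2_eq_square algebra_simps)
    also have "\<dots> = 4"
      by (simp add: s_def)
    finally have "(-3 + 3 * s) * (1 + s) = 4" .
    moreover have "0 < s"
      by (simp add: s_def)
    ultimately show ?thesis
      unfolding \<open>sqrt 21 = 3 * s\<close> s_def[symmetric] by (subst frac_eq_eq) simp_all
  qed
  finally show ?thesis
    by simp
qed

lemma u2_cont_analytic_at_twelfth:
  assumes "0 < \<theta>" and "\<theta> < 2 * pi"
  shows "\<exists>r>0. \<exists>g. g holomorphic_on ball (1/12) r \<and>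
    (\<forall>z\<in>ball (1/12) r \<inter> Dom \<theta>. u2_branch z (sqrt_disc \<theta> z) = g z) \<and>
    g (1/12) = (-3 + of_real (sqrt 21)) / 2"
proof -
  obtain r where "0 < r"
    and near: "\<And>z. z \<in> ball (1/12) r \<Longrightarrow> 0 < Re z \<and> sqrt_disc \<theta> z = csqrt (z\<^sup>2 + 4 * z)"
    using sqrt_disc_near_twelfth[OF assms] by blast
  define g where "g z = u2_branch z (csqrt (z\<^sup>2 + 4 * z))" for z
  have "g holomorphic_on ball (1/12) r"
    unfolding g_def
  proof (rule holomorphic_on_u2_branch)
    show "(\<lambda>z. csqrt (z\<^sup>2 + 4 * z)) holomorphic_on ball (1/12) r"
      using near disc_notin_nonpos_Reals_if_Re_pos by (intro holomorphic_intros) auto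
    fix z :: complex
    assume "z \<in> ball (1/12) r"
    then have "0 < Re (1 + 2 * z + 2 * csqrt (z\<^sup>2 + 4 * z))"
      using near[of z] Re_csqrt[of "z\<^sup>2 + 4 * z"] by (simp del: csqrt.simps)
    then show "1 + 2 * z + 2 * csqrt (z\<^sup>2 + 4 * z) \<notin> \<real>\<^sub>\<le>\<^sub>0"
      by (auto simp: complex_nonpos_Reals_iff)
  qed
  moreover have "\<forall>z\<in>ball (1/12) r \<inter> Dom \<theta>. u2_branch z (sqrt_disc \<theta> z) = g z"
    using near by (simp add: g_def)
  moreover have "g (1/12) = (-3 + of_real (sqrt 21)) / 2"
    unfolding g_def by (rule u2_branch_twelfth)
  ultimately show ?thesis
    using \<open>0 < r\<close> by blast
qed

lemma disc_root_near_twelfth: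
  fixes z \<rho> :: complex
  assumes "\<rho>\<^sup>2 = z\<^sup>2 + 4 * z" and "0 \<le> Re \<rho>" and "norm (z - 1/12) \<le> 1"
  shows "norm (\<rho> - 7/12) \<le> 9 * norm (z - 1/12)"
proof -
  have "norm (z + 49/12) \<le> norm (z - 1/12) + norm (25/6 :: complex)"
    using norm_triangle_ineq[of "z - 1/12" "25/6"] by (simp add: add.commute)
  then have "norm (z + 49/12) \<le> 31/6"
    using assms(3) by simp
  have "\<rho>\<^sup>2 - (7/12)\<^sup>2 = (z - 1/12) * (z + 49/12)"
    unfolding assms(1) by (simp add: power2_eq_square field_simps)
  then have "norm (\<rho>\<^sup>2 - (7/12)\<^sup>2) \<le> norm (z - 1/12) * (31/6)"
    using mult_left_mono[OF \<open>norm (z + 49/12) \<le> 31/6\<close> norm_ge_zero[of "z - 1/12"]]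
    by (simp add: norm_mult)
  moreover have "7/12 * norm (\<rho> - 7/12) \<le> norm (\<rho>\<^sup>2 - (7/12)\<^sup>2)"
    using Re_mult_norm_diff_le_norm_square_diff[of \<rho> "7/12"] assms(2) by simp
  ultimately show ?thesis
    using norm_ge_zero[of "z - 1/12"] by linarith
qed

lemma scaled_csqrt_disc_branch_near_one:
  fixes z \<rho> :: complex
  assumes "\<rho>\<^sup>2 = z\<^sup>2 + 4 * z" and "0 \<le> Re \<rho>" and "norm (z - 1/12) \<le> 1"
  shows "norm (of_real (sqrt (3/7)) * csqrt (1 + 2 * z + 2 * \<rho>) - 1) \<le> norm (1 - 12 * z)"
proof -
  define B where "B = of_real (sqrt (3/7)) * csqrt (1 + 2 * z + 2 * \<rho>)"
  have "0 \<le> Re B"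
    using Re_csqrt by (simp add: B_def del: csqrt.simps)
  then have "norm (B - 1) \<le> norm (B\<^sup>2 - 1)"
    using Re_mult_norm_diff_le_norm_square_diff[of B 1] by simp
  also have "B\<^sup>2 - 1 = 6/7 * ((z - 1/12) + (\<rho> - 7/12))"
    by (simp add: B_def power_mult_distrib field_simps flip: of_real_power)
  also have "norm (6/7 * ((z - 1/12) + (\<rho> - 7/12))) = 6/7 * norm ((z - 1/12) + (\<rho> - 7/12))"
    unfolding norm_mult by simp
  also have "\<dots> \<le> 6/7 * (norm (z - 1/12) + norm (\<rho> - 7/12))"
    by (rule mult_left_mono[OF norm_triangle_ineq]) simp
  also have "\<dots> \<le> 6/7 * (10 * norm (z - 1/12))"
    using disc_root_near_twelfth[OF assms] by simp
  also have "\<dots> \<le> norm (1 - 12 * z)"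
    by (simp add: norm_one_minus_twelve_mult)
  finally show ?thesis
    by (simp add: B_def)
qed

lemma two_mult_div_add_sub_eq:
  fixes b c k :: "'a :: field"
  assumes "b + c \<noteq> 0"
  shows "2 * b / (b + c) - (2 - 2 * k * c) = 2 * c * ((k * b - 1) + k * c) / (b + c)"
proof -
  have "2 * b / (b + c) - (2 - 2 * k * c) = (2 * b - (2 - 2 * k * c) * (b + c)) / (b + c)"
    using assms by (rule divide_diff_eq_iff)
  also have "2 * b - (2 - 2 * k * c) * (b + c) = 2 * c * ((k * b - 1) + k * c)"
    by (simp add: algebra_simps)
  finally show ?thesis .
qed

lemma norm_two_mult_div_add_sub_le:
  fixes b c k :: complex
  assumes "1 \<le> norm b" and "norm c \<le> 1/2" and "norm k \<le> 1"
  shows "norm (2 * b / (b + c) - (2 - 2 * k * c)) \<le> 4 * norm c * (norm (k * b - 1) + norm c)"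
proof -
  have "1/2 \<le> norm (b + c)"
    using norm_diff_ineq[of b c] assms(1,2) by linarith
  then have "b + c \<noteq> 0"
    by auto
  have "norm ((k * b - 1) + k * c) \<le> norm (k * b - 1) + norm c"
    using norm_triangle_ineq[of "k * b - 1" "k * c"] mult_right_mono[OF assms(3) norm_ge_zero[of c]]
    by (simp add: norm_mult)
  have "norm (2 * b / (b + c) - (2 - 2 * k * c))
      = 2 * norm c * norm ((k * b - 1) + k * c) / norm (b + c)"
    unfolding two_mult_div_add_sub_eq[OF \<open>b + c \<noteq> 0\<close>] by (simp add: norm_mult norm_divide)
  also have "\<dots> \<le> 2 * norm c * (norm (k * b - 1) + norm c) / (1/2)"
    using \<open>norm ((k * b - 1) + k * c) \<le> norm (k * b - 1) + norm c\<close> \<open>1/2 \<le> norm (b + c)\<close>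
    by (intro frac_le mult_left_mono) simp_all
  finally show ?thesis
    by simp
qed

lemma u1_branch_near_twelfth:
  fixes z \<rho> :: complex
  assumes "\<rho>\<^sup>2 = z\<^sup>2 + 4 * z" and "0 \<le> Re \<rho>" and "0 \<le> Re z" and "norm (1 - 12 * z) \<le> 1/4"
  shows "norm (u1_branch z \<rho> - (2 - of_real (sqrt (12/7)) * csqrt (1 - 12 * z))) \<le> 6 * norm (1 - 12 * z)"
proof -
  define B C k where "B = csqrt (1 + 2 * z + 2 * \<rho>)" and "C = csqrt (1 - 12 * z)"
    and "k = complex_of_real (sqrt (3/7))"
  define w where "w = norm (1 - 12 * z)"
  have "1 \<le> norm (1 + 2 * z + 2 * \<rho>)"
    using assms(2,3) complex_Re_le_cmod[of "1 + 2 * z + 2 * \<rho>"] by simp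
  then have "1 \<le> norm B"
    by (simp add: B_def)
  have C2: "(norm C)\<^sup>2 = w"
    by (simp add: C_def w_def)
  then have "(norm C)\<^sup>2 \<le> (1/2)\<^sup>2"
    using assms(4) by (simp add: w_def power_divide)
  then have "norm C \<le> 1/2"
    by (rule power2_le_imp_le) simp
  have "norm (z - 1/12) \<le> 1"
    using assms(4) by (simp add: norm_one_minus_twelve_mult)
  then have "norm (k * B - 1) \<le> w"
    using scaled_csqrt_disc_branch_near_one[OF assms(1,2)] by (simp add: B_def k_def w_def)
  have "sqrt (12/7) = 2 * sqrt (3/7)"
    by (rule real_sqrt_unique) (simp_all add: power_mult_distrib)
  then have "u1_branch z \<rho> - (2 - of_real (sqrt (12/7)) * C) = 2 * B / (B + C) - (2 - 2 * k * C)"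
    by (simp add: u1_branch_def k_def flip: B_def C_def)
  also have "norm \<dots> \<le> 4 * norm C * (norm (k * B - 1) + norm C)"
    using \<open>1 \<le> norm B\<close> \<open>norm C \<le> 1/2\<close> by (intro norm_two_mult_div_add_sub_le) (simp_all add: k_def)
  also have "\<dots> \<le> 4 * (norm C * w + (norm C)\<^sup>2)"
    using mult_left_mono[OF \<open>norm (k * B - 1) \<le> w\<close> norm_ge_zero[of C]]
    by (simp add: power2_eq_square algebra_simps)
  also have "\<dots> \<le> 6 * w"
    using mult_right_mono[OF \<open>norm C \<le> 1/2\<close>, of w] C2 by (simp add: w_def)
  finally show ?thesis
    by (simp only: C_def w_def)
qed

lemma u1_cont_expansion_at_twelfth:
  assumes "0 < \<theta>" and "\<theta> < 2 * pi"
  shows "(\<lambda>z. u1_branch z (sqrt_disc \<theta> z) - (2 - of_real (sqrt (12/7)) * csqrt (1 - 12 * z)))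
    \<in> O[at (1/12) within Dom \<theta>](\<lambda>z. 1 - 12 * z)"
proof (rule bigoI)
  obtain r where "0 < r" "r \<le> 1/48"
    and near: "\<And>z. z \<in> ball (1/12) r \<Longrightarrow> 0 < Re z \<and> sqrt_disc \<theta> z = csqrt (z\<^sup>2 + 4 * z)"
    using sqrt_disc_near_twelfth[OF assms] by blast
  have "norm (u1_branch z (sqrt_disc \<theta> z) - (2 - of_real (sqrt (12/7)) * csqrt (1 - 12 * z)))
      \<le> 6 * norm (1 - 12 * z)" if "dist z (1/12) < r" for z
  proof -
    have z: "z \<in> ball (1/12) r"
      using that by (simp add: dist_commute)
    have "norm (1 - 12 * z) \<le> 1/4"
      using that \<open>r \<le> 1/48\<close> by (simp add: norm_one_minus_twelve_mult dist_norm)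
    with near[OF z] show ?thesis
      using Re_csqrt by (intro u1_branch_near_twelfth) (auto simp: sqrt_disc_squared less_imp_le simp del: csqrt.simps)
  qed
  with \<open>0 < r\<close> show "\<forall>\<^sub>F z in at (1/12) within Dom \<theta>.
      norm (u1_branch z (sqrt_disc \<theta> z) - (2 - of_real (sqrt (12/7)) * csqrt (1 - 12 * z)))
      \<le> 6 * norm (1 - 12 * z)"
    unfolding eventually_at by blast
qed

theorem lemma4p8:
  fixes \<theta> :: real
  assumes "0 < \<theta>" and "\<theta> < 2 * pi"
  shows "\<exists>U1 U2.
     U1 holomorphic_on Dom \<theta> \<and> U2 holomorphic_on Dom \<theta> \<and>
     (\<forall>x\<in>{0<..<1/12}. U1 (complex_of_real x) = complex_of_real (u1 x)
                      \<and> U2 (complex_of_real x) = complex_of_real (u2 x)) \<and>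
     (\<exists>r>0. \<exists>g. g holomorphic_on ball (1/12) r \<and>
                (\<forall>z\<in>ball (1/12) r \<inter> Dom \<theta>. U2 z = g z) \<and>
                g (1/12) = (-3 + complex_of_real (sqrt 21)) / 2) \<and>
     (\<lambda>z. U1 z - (2 - complex_of_real (sqrt (12/7)) * csqrt (1 - 12 * z)))
        \<in> O[at (1/12) within Dom \<theta>](\<lambda>z. 1 - 12 * z)"
proof (rule exI[of _ "\<lambda>z. u1_branch z (sqrt_disc \<theta> z)"], rule exI[of _ "\<lambda>z. u2_branch z (sqrt_disc \<theta> z)"],
    intro conjI)
  have branch: "1 + 2 * z + 2 * sqrt_disc \<theta> z \<notin> \<real>\<^sub>\<le>\<^sub>0" if "z \<in> Dom \<theta>" for z
    using disc_branch_notin_nonpos_Reals[OF that sqrt_disc_squared] .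
  show "(\<lambda>z. u1_branch z (sqrt_disc \<theta> z)) holomorphic_on Dom \<theta>"
    using branch by (intro holomorphic_on_u1_branch holomorphic_on_Dom_sqrt_disc) (auto simp: mem_Dom_iff)
  show "(\<lambda>z. u2_branch z (sqrt_disc \<theta> z)) holomorphic_on Dom \<theta>"
    using branch by (intro holomorphic_on_u2_branch holomorphic_on_Dom_sqrt_disc)
  show "\<forall>x\<in>{0<..<1/12}. u1_branch (of_real x) (sqrt_disc \<theta> (of_real x)) = of_real (u1 x)
      \<and> u2_branch (of_real x) (sqrt_disc \<theta> (of_real x)) = of_real (u2 x)"
    by (simp add: sqrt_disc_of_real[OF assms] u1_branch_of_real u2_branch_of_real)
qed (use u2_cont_analytic_at_twelfth[OF assms] u1_cont_expansion_at_twelfth[OF assms] in simp_all)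

end
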